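(* Let $B$ be a Batanin tree and $n\in\mathbb N$. Then the cosource and cotarget $s^B_n,t^B_n\colon\mathrm{Pos}(\partial_nB)\to\mathrm{Pos}(B)$ each induce bijections between the sets of positions of dimension $k$ for every $k<n$. Moreover, they are injective on positions of dimension $n$, and for every position $p\in\mathrm{Pos}_n(B)$ there exists a unique position $q\in\mathrm{Pos}_n(\partial_nB)$ such that $s^B_n(q)$, $t^B_n(q)$ and $p$ are parallel.
   Context: Batanin trees are generated inductively: for every finite list $B_1,\dots,B_n$ ($n\ge0$) of Batanin trees there is a tree $[B_1,\dots,B_n]$. The suspension $\Sigma Y$ of a globular set $Y$ has $0$-cells $v_-,v_+$ and $(\Sigma Y)_{n+1}=Y_n$, every $1$-cell having source $v_-$ and target $v_+$. The globular set of positions is $\mathrm{Pos}([B_1,\dots,B_n])=\Sigma\mathrm{Pos}(B_1)\vee\cdots\vee\Sigma\mathrm{Pos}(B_n)$, the iterated wedge sum gluing $v_+$ of each summand to $v_-$ of the next (a single $0$-cell when $n=0$); $\mathrm{Pos}_n(B)$ denotes its set of $n$-cells. Two cells are parallel if they have the same source and target (all $0$-cells are parallel). Boundary: $\partial_0B=[\,]$, $\partial_{k+1}[B_1,\dots,B_n]=[\partial_kB_1,\dots,\partial_kB_n]$. Cosource/cotarget $s^B_k,t^B_k\colon\mathrm{Pos}(\partial_kB)\to\mathrm{Pos}(B)$ for $B=[B_1,\dots,B_n]$: $s^B_0$ picks $\mathrm{inc}_1(v_-)$, $t^B_0$ picks $\mathrm{inc}_n(v_+)$, $s^B_{k+1}=\bigvee_i\Sigma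 s^{B_i}_k$, $t^B_{k+1}=\bigvee_i\Sigma t^{B_i}_k$, where $\mathrm{inc}_i$ is the inclusion of the $i$-th wedge summand. *)

theory Defs
  imports Main
begin

datatype btree = Node "btree list"

primrec children :: "btree \<Rightarrow> btree list" where
  "children (Node Bs) = Bs"

text \<open>The 0-cells of Pos([B1..Bn]) = \<Sigma>Pos(B1) \<or> ... \<or> \<Sigma>Pos(Bn) are the n+1 wedge
  points V 0, ..., V n (V (i-1) = v_- of the i-th summand, V i = its v_+, 0-indexed below);
  a (k+1)-cell is C i c with i < n and c a k-cell of Pos(B_(i+1)) (0-indexed: children ! i).\<close>
datatype cell = V nat | C nat cell

primrec cdim :: "cell \<Rightarrow> nat" where
  "cdim (V j) = 0"
| "cdim (C i c) = Suc (cdim c)"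

primrec pos :: "nat \<Rightarrow> btree \<Rightarrow> cell set" where
  "pos 0 B = {V j | j. j \<le> length (children B)}"
| "pos (Suc k) B = {C i c | i c. i < length (children B) \<and> c \<in> pos k (children B ! i)}"

text \<open>Source and target of a cell of positive dimension (meaningless on 0-cells).\<close>
fun csrc :: "cell \<Rightarrow> cell" where
  "csrc (V j) = V j"
| "csrc (C i (V j)) = V i"
| "csrc (C i (C j c)) = C i (csrc (C j c))"

fun ctgt :: "cell \<Rightarrow> cell" where
  "ctgt (V j) = V j"
| "ctgt (C i (V j)) = V (Suc i)"
| "ctgt (C i (C j c)) = C i (ctgt (C j c))"

definition parallel :: "cell \<Rightarrow> cell \<Rightarrow> bool" where
  "parallel p q \<longleftrightarrow> cdim p = cdim q \<and>
     (cdim p = 0 \<or> (csrc p = csrc q \<and> ctgt p = ctgt q))"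

primrec bd :: "nat \<Rightarrow> btree \<Rightarrow> btree" where
  "bd 0 B = Node []"
| "bd (Suc k) B = Node (map (bd k) (children B))"

primrec cosrc :: "nat \<Rightarrow> btree \<Rightarrow> cell \<Rightarrow> cell" where
  "cosrc 0 B c = V 0"
| "cosrc (Suc k) B c = (case c of V j \<Rightarrow> V j
                                | C i c' \<Rightarrow> C i (cosrc k (children B ! i) c'))"

primrec cotgt :: "nat \<Rightarrow> btree \<Rightarrow> cell \<Rightarrow> cell" where
  "cotgt 0 B c = V (length (children B))"
| "cotgt (Suc k) B c = (case c of V j \<Rightarrow> V j
                                | C i c' \<Rightarrow> C i (cotgt k (children B ! i) c'))"

end

theory Submission
  imports Defs
begin

text \<open>
  A \<open>k\<close>-position of \<open>B\<close> is a path \<open>C i\<^sub>1 (\<dots> (C i\<^sub>k (V j)))\<close> into the tree. The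
  cosource and cotarget copy the path of a position of \<open>\<partial>\<^sub>n B\<close> and differ only in the
  0-cell they put at depth \<open>n\<close>. Paths of length \<open>k < n\<close> in \<open>\<partial>\<^sub>n B\<close> and in \<open>B\<close> are the
  same, which gives the bijections; an \<open>n\<close>-path of \<open>\<partial>\<^sub>n B\<close> ends in the unique 0-cell of a
  leaf, which gives injectivity. Two \<open>n\<close>-positions are parallel exactly when their paths
  \<open>i\<^sub>1 \<dots> i\<^sub>n\<close> agree, and each such path of \<open>B\<close> occurs exactly once in \<open>\<partial>\<^sub>n B\<close>.
\<close>

text \<open>None of the properties below depends on the 0-cell \<open>v\<close> placed at depth \<open>n\<close>, so they are
  proved once for cosource and cotarget.\<close>
primrec coface :: "(btree \<Rightarrow> nat) \<Rightarrow> nat \<Rightarrow> btree \<Rightarrow> cell \<Rightarrow> cell" where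
  "coface v 0 B c = V (v B)"
| "coface v (Suc k) B c = (case c of V j \<Rightarrow> V j
                                   | C i c' \<Rightarrow> C i (coface v k (children B ! i) c'))"

lemma cosrc_eq_coface: "cosrc = coface (\<lambda>_. 0)"
proof (intro ext)
  show "cosrc n B c = coface (\<lambda>_. 0) n B c" for n B c
    by (induction n arbitrary: B c) (auto split: cell.split)
qed

lemma cotgt_eq_coface: "cotgt = coface (\<lambda>B. length (children B))"
proof (intro ext)
  show "cotgt n B c = coface (\<lambda>B. length (children B)) n B c" for n B c
    by (induction n arbitrary: B c) (auto split: cell.split)
qed

lemma parallel_C_iff: "parallel (C i x) (C j y) \<longleftrightarrow> i = j \<and> parallel x y"
  by (cases x; cases y) (auto simp: parallel_def)

lemma inj_on_coface: "k \<le> n \<Longrightarrow> inj_on (coface v n B) (pos k (bd n B))"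
proof (induction n arbitrary: B k)
  case 0
  then show ?case by (auto simp: inj_on_def)
next
  case (Suc n)
  then show ?case
    by (cases k) (fastforce simp: inj_on_def)+
qed

lemma pos_Suc_eq_UN: "pos (Suc k) B = (\<Union>i<length (children B). C i ` pos k (children B ! i))"
  by auto

lemma coface_image: "k < n \<Longrightarrow> coface v n B ` pos k (bd n B) = pos k B"
proof (induction n arbitrary: B k)
  case 0
  then show ?case by simp
next
  case (Suc n)
  show ?case
  proof (cases k)
    case 0
    then show ?thesis by (auto simp: image_def)
  next
    case (Suc k')
    with Suc.prems have IH: "coface v n B' ` pos k' (bd n B') = pos k' B'" for B'
      using Suc.IH by simp
    have "coface v (Suc n) B ` pos (Suc k') (bd (Suc n) B)
        = (\<Union>i<length (children B).
             C i ` coface v n (children B ! i) ` pos k' (bd n (children B ! i)))"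
      unfolding pos_Suc_eq_UN by (simp add: image_UN image_image)
    also have "\<dots> = pos (Suc k') B"
      unfolding pos_Suc_eq_UN IH ..
    finally show ?thesis
      using Suc by simp
  qed
qed

lemma bij_betw_coface: "k < n \<Longrightarrow> bij_betw (coface v n B) (pos k (bd n B)) (pos k B)"
  by (simp add: bij_betw_def inj_on_coface coface_image)

lemma ex1_parallel_cofaces:
  assumes "p \<in> pos n B"
  shows "\<exists>!q. q \<in> pos n (bd n B) \<and>
           parallel (coface v n B q) (coface w n B q) \<and>
           parallel (coface v n B q) p \<and> parallel (coface w n B q) p"
  using assms
proof (induction n arbitrary: B p)
  case 0
  then show ?case by (auto simp: parallel_def)
next
  case (Suc n)
  then obtain i c where p: "p = C i c" "i < length (children B)" "c \<in> pos n (children B ! i)"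
    by auto
  let ?P = "\<lambda>r. r \<in> pos n (bd n (children B ! i)) \<and>
      parallel (coface v n (children B ! i) r) (coface w n (children B ! i) r) \<and>
      parallel (coface v n (children B ! i) r) c \<and> parallel (coface w n (children B ! i) r) c"
  from Suc.IH[OF p(3)] obtain r where "?P r" and r_unique: "\<And>r'. ?P r' \<Longrightarrow> r' = r"
    by blast
  show ?case
  proof (rule ex1I[where a = "C i r"])
    show "C i r \<in> pos (Suc n) (bd (Suc n) B) \<and>
      parallel (coface v (Suc n) B (C i r)) (coface w (Suc n) B (C i r)) \<and>
      parallel (coface v (Suc n) B (C i r)) p \<and> parallel (coface w (Suc n) B (C i r)) p"
      using p \<open>?P r\<close> by (simp add: parallel_C_iff)
  next
    fix q
    assume q: "q \<in> pos (Suc n) (bd (Suc n) B) \<and>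
      parallel (coface v (Suc n) B q) (coface w (Suc n) B q) \<and>
      parallel (coface v (Suc n) B q) p \<and> parallel (coface w (Suc n) B q) p"
    then obtain j r' where q_eq: "q = C j r'" "j < length (children B)"
      "r' \<in> pos n (bd n (children B ! j))"
      by auto
    with q p have "j = i"
      by (simp add: parallel_C_iff)
    with q q_eq p have "?P r'"
      by (simp add: parallel_C_iff)
    then show "q = C i r"
      using q_eq \<open>j = i\<close> r_unique by simp
  qed
qed

theorem lemma4p1:
  fixes B :: btree and n :: nat
  shows "(\<forall>k<n. bij_betw (cosrc n B) (pos k (bd n B)) (pos k B)
               \<and> bij_betw (cotgt n B) (pos k (bd n B)) (pos k B))
       \<and> inj_on (cosrc n B) (pos n (bd n B))
       \<and> inj_on (cotgt n B) (pos n (bd n B))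
       \<and> (\<forall>p\<in>pos n B. \<exists>!q. q \<in> pos n (bd n B) \<and>
              parallel (cosrc n B q) (cotgt n B q) \<and>
              parallel (cosrc n B q) p \<and> parallel (cotgt n B q) p)"
  unfolding cosrc_eq_coface cotgt_eq_coface
  by (simp add: bij_betw_coface inj_on_coface ex1_parallel_cofaces)

end
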